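(* Let $\Sigma=(X,\mathcal{S},\phi)$ be a forward complete dynamical system. Let $t_1>0$, $G_0>0$, and let $\beta$ be a function of class $\mathcal{K}_\infty$ such that $\limsup_{r\downarrow 0}\frac{\beta(r)}{r}<+\infty$ and $$\|\phi(t,x,\sigma)\|\le G_0\,\beta(\|x\|)\quad \text{for all } t\in[0,t_1],\ x\in X,\ \sigma\in\mathcal{S}.$$ Then: (i) If there exist $R>0$, a functional $V:B_X(0,R)\to\mathbb{R}_+$ and $p,c>0$ such that for every $x\in B_X(0,R)$ and $\sigma\in\mathcal{S}$, $$V(x)\le c\|x\|^p,\qquad \underline{D}_\sigma V(x)\le -\|x\|^p,$$ and such that, for every $x\in B_X(0,R)$ and $\sigma\in\mathcal{S}$, the map $t\mapsto V(\phi(t,x,\sigma))$ is continuous from the left at every $t>0$ such that $\phi(t,x,\sigma)\in B_X(0,R)$, then $\Sigma$ is ULES. (ii) If for every $R>0$ there exist $V_R:B_X(0,R)\to\mathbb{R}_+$, $p_R>0$, $c_R>0$ satisfying all the hypotheses of (i) with $V=V_R$, $p=p_R$, $c=c_R$, and moreover $$\limsup_{R\to+\infty}\beta^{-1}\!\left(\frac{R}{G_0}\right)\min\left\{1,\left(\frac{t_1}{c_R}\right)^{1/p_R}\right\}=+\infty,$$ then $\Sigma$ is USGES. (iii) If $\beta$ is the identity function and there exist $p,c>0$ and a functional $V:X\to\mathbb{R}_+$ such that for every $x\in X$ and $\sigma\in\mathcal{S}$ the map $t\mapsto V(\phi(t,x,\sigma))$ is continuous from the left, $V(x)\le c\|x\|^p$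 and $\underline{D}_\sigma V(x)\le-\|x\|^p$, then $\Sigma$ is UGES.
   Context: $(X,\|\cdot\|)$ is a Banach space and $B_X(x,r)$ is the closed ball of center $x$ and radius $r$. A function $\alpha:\mathbb{R}_+\to\mathbb{R}_+$ is of class $\mathcal{K}_\infty$ if it is continuous, increasing, unbounded and $\alpha(0)=0$. Let $\mathcal{Q}$ be a nonempty set and $\mathcal{S}$ a set of functions $\sigma:\mathbb{R}_+\to\mathcal{Q}$ closed by time-shift (for $\sigma\in\mathcal{S}$, $\tau\ge0$, $\mathbb{T}_\tau\sigma:s\mapsto\sigma(\tau+s)$ is in $\mathcal{S}$) and by concatenation (for $\sigma_1,\sigma_2\in\mathcal{S}$, $\tau>0$, the function equal to $\sigma_1$ on $[0,\tau]$ and with $\sigma(\tau+t)=\sigma_2(t)$ for $t>0$ is in $\mathcal{S}$). A triple $\Sigma=(X,\mathcal{S},\phi)$ with $\phi:\mathbb{R}_+\times X\times\mathcal{S}\to X$ is a forward complete dynamical system if: $\phi(0,x,\sigma)=x$; $\phi(t,x,\tilde\sigma)=\phi(t,x,\sigma)$ whenever $\tilde\sigma=\sigma$ on $[0,t]$; $t\mapsto\phi(t,x,\sigma)$ is continuous; $\phi(\tau,\phi(t,x,\sigma),\mathbb{T}_t\sigma)=\phi(t+\tau,x,\sigma)$ for all $t,\tau\ge0$. The lower Dini derivative of $V$ along $\Sigma$ is $\underline{D}_\sigma V(x)=\liminf_{h\downarrow0}\frac1h\big(V(\phi(h,x,\sigma))-V(x)\big)$. $\Sigma$ is ULES if there exist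 $R,M,\lambda>0$ with $\|\phi(t,x,\sigma)\|\le Me^{-\lambda t}\|x\|$ for all $t\ge0$, $x\in B_X(0,R)$, $\sigma\in\mathcal{S}$; USGES if for every $r>0$ there exist $M(r),\lambda(r)>0$ with $\|\phi(t,x,\sigma)\|\le M(r)e^{-\lambda(r)t}\|x\|$ for all $t\ge0$, $x\in B_X(0,r)$, $\sigma\in\mathcal{S}$; UGES if there exist $M,\lambda>0$ with $\|\phi(t,x,\sigma)\|\le Me^{-\lambda t}\|x\|$ for all $t\ge0$, $x\in X$, $\sigma\in\mathcal{S}$. *)

theory Defs
  imports "HOL-Analysis.Analysis"
begin

text \<open>Signals are functions real \<Rightarrow> 'q; only their values on [0,\<infinity>) matter.\<close>

definition shift_closed :: "(real \<Rightarrow> 'q) set \<Rightarrow> bool" where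
  "shift_closed S \<longleftrightarrow> (\<forall>\<sigma>\<in>S. \<forall>\<tau>\<ge>0. (\<lambda>s. \<sigma> (\<tau> + s)) \<in> S)"

definition concat_closed :: "(real \<Rightarrow> 'q) set \<Rightarrow> bool" where
  "concat_closed S \<longleftrightarrow> (\<forall>\<sigma>1\<in>S. \<forall>\<sigma>2\<in>S. \<forall>\<tau>>0.
      (\<lambda>t. if t \<le> \<tau> then \<sigma>1 t else \<sigma>2 (t - \<tau>)) \<in> S)"

definition forward_complete_ds ::
  "(real \<Rightarrow> 'q) set \<Rightarrow> (real \<Rightarrow> 'x::real_normed_vector \<Rightarrow> (real \<Rightarrow> 'q) \<Rightarrow> 'x) \<Rightarrow> bool" where
  "forward_complete_ds S \<phi> \<longleftrightarrow>
     shift_closed S \<and> concat_closed S \<and>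
     (\<forall>x. \<forall>\<sigma>\<in>S. \<phi> 0 x \<sigma> = x) \<and>
     (\<forall>x. \<forall>\<sigma>\<in>S. \<forall>\<sigma>'\<in>S. \<forall>t\<ge>0. (\<forall>s\<in>{0..t}. \<sigma>' s = \<sigma> s) \<longrightarrow> \<phi> t x \<sigma>' = \<phi> t x \<sigma>) \<and>
     (\<forall>x. \<forall>\<sigma>\<in>S. continuous_on {0..} (\<lambda>t. \<phi> t x \<sigma>)) \<and>
     (\<forall>x. \<forall>\<sigma>\<in>S. \<forall>t\<ge>0. \<forall>\<tau>\<ge>0. \<phi> \<tau> (\<phi> t x \<sigma>) (\<lambda>s. \<sigma> (t + s)) = \<phi> (t + \<tau>) x \<sigma>)"

definition class_K_inf :: "(real \<Rightarrow> real) \<Rightarrow> bool" where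
  "class_K_inf \<alpha> \<longleftrightarrow> continuous_on {0..} \<alpha> \<and> strict_mono_on {0..} \<alpha> \<and>
     \<alpha> 0 = 0 \<and> (\<forall>M. \<exists>r\<ge>0. \<alpha> r > M)"

definition lower_dini ::
  "('x \<Rightarrow> real) \<Rightarrow> (real \<Rightarrow> 'x \<Rightarrow> 's \<Rightarrow> 'x) \<Rightarrow> 's \<Rightarrow> 'x \<Rightarrow> ereal" where
  "lower_dini V \<phi> \<sigma> x = Liminf (at_right 0) (\<lambda>h. ereal ((V (\<phi> h x \<sigma>) - V x) / h))"

definition ULES :: "(real \<Rightarrow> 'q) set \<Rightarrow> (real \<Rightarrow> 'x::real_normed_vector \<Rightarrow> (real \<Rightarrow> 'q) \<Rightarrow> 'x) \<Rightarrow> bool" where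
  "ULES S \<phi> \<longleftrightarrow> (\<exists>R>0. \<exists>M>0. \<exists>lam>0. \<forall>t\<ge>0. \<forall>x\<in>cball 0 R. \<forall>\<sigma>\<in>S.
      norm (\<phi> t x \<sigma>) \<le> M * exp (- lam * t) * norm x)"

definition USGES :: "(real \<Rightarrow> 'q) set \<Rightarrow> (real \<Rightarrow> 'x::real_normed_vector \<Rightarrow> (real \<Rightarrow> 'q) \<Rightarrow> 'x) \<Rightarrow> bool" where
  "USGES S \<phi> \<longleftrightarrow> (\<forall>r>0. \<exists>M>0. \<exists>lam>0. \<forall>t\<ge>0. \<forall>x\<in>cball 0 r. \<forall>\<sigma>\<in>S.
      norm (\<phi> t x \<sigma>) \<le> M * exp (- lam * t) * norm x)"

definition UGES :: "(real \<Rightarrow> 'q) set \<Rightarrow> (real \<Rightarrow> 'x::real_normed_vector \<Rightarrow> (real \<Rightarrow> 'q) \<Rightarrow> 'x) \<Rightarrow> bool" where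
  "UGES S \<phi> \<longleftrightarrow> (\<exists>M>0. \<exists>lam>0. \<forall>t\<ge>0. \<forall>x. \<forall>\<sigma>\<in>S.
      norm (\<phi> t x \<sigma>) \<le> M * exp (- lam * t) * norm x)"

text \<open>Hypotheses of item (i): V is a functional on the closed ball B_X(0,R) (its values
  outside the ball are irrelevant except through the Dini derivative at boundary points).\<close>
definition local_lyap ::
  "(real \<Rightarrow> 'q) set \<Rightarrow> (real \<Rightarrow> 'x::real_normed_vector \<Rightarrow> (real \<Rightarrow> 'q) \<Rightarrow> 'x) \<Rightarrow>
   real \<Rightarrow> ('x \<Rightarrow> real) \<Rightarrow> real \<Rightarrow> real \<Rightarrow> bool" where
  "local_lyap S \<phi> R V p c \<longleftrightarrow>
     (\<forall>x\<in>cball 0 R. V x \<ge> 0 \<and> V x \<le> c * norm x powr p \<and>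
        (\<forall>\<sigma>\<in>S. lower_dini V \<phi> \<sigma> x \<le> ereal (- (norm x powr p)) \<and>
           (\<forall>t>0. \<phi> t x \<sigma> \<in> cball 0 R \<longrightarrow> continuous (at_left t) (\<lambda>s. V (\<phi> s x \<sigma>)))))"

end

theory Submission
  imports Defs
begin

text \<open>Along a trajectory that stays in the ball where \<open>V\<close> is defined, the Dini condition and
  left continuity make \<open>t \<mapsto> V(\<phi>(t)) + t \<cdot> min |\<phi>|\<^sup>p\<close> nonincreasing, so on every time window of
  length \<open>T\<close> some state satisfies \<open>T |\<phi>(s)|\<^sup>p \<le> V\<close>. Combined with the overshoot bound on windows
  of length \<open>t1\<close>, this keeps trajectories from a small enough ball inside the domain of \<open>V\<close>
  forever. Since \<open>V \<le> c |x|\<^sup>p\<close>, \<open>V\<close> then at least halves on every window of length \<open>c\<close>, so it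
  decays exponentially, and so does \<open>|\<phi>|\<^sup>p\<close> thanks to the linear bound on \<open>\<beta>\<close> near \<open>0\<close>. The three
  items only differ in how the initial radius is matched to the domain of \<open>V\<close>.\<close>

lemma right_descent_imp_le:
  fixes k :: "real \<Rightarrow> real"
  assumes ab: "a \<le> b"
    and descent: "\<And>u. a \<le> u \<Longrightarrow> u < b \<Longrightarrow> \<exists>h>0. u + h \<le> b \<and> k (u + h) < k u"
    and cont: "\<And>u. a < u \<Longrightarrow> u \<le> b \<Longrightarrow> continuous (at_left u) k"
  shows "k b \<le> k a"
proof -
  define T where "T = {u\<in>{a..b}. k u \<le> k a}"
  define s where "s = Sup T"
  have aT: "a \<in> T" using ab by (auto simp: T_def)
  have bdd: "bdd_above T" by (auto simp: T_def bdd_above_def)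
  have as: "a \<le> s" unfolding s_def using aT bdd by (rule cSup_upper)
  have sb: "s \<le> b" unfolding s_def using aT by (intro cSup_least) (auto simp: T_def)
  have sT: "s \<in> T"
  proof (rule ccontr)
    assume nT: "s \<notin> T"
    have sa: "a < s" using nT aT as by (cases "a = s") auto
    have ks: "k a < k s" using nT as sb by (auto simp: T_def)
    have "(k \<longlongrightarrow> k s) (at_left s)" using cont[OF sa sb] by (simp add: continuous_within)
    then have "eventually (\<lambda>u. k a < k u) (at_left s)" using ks by (rule order_tendstoD(1))
    then obtain b' where b': "b' < s" "\<And>y. b' < y \<Longrightarrow> y < s \<Longrightarrow> k a < k y"
      using sa by (auto simp: eventually_at_left)
    obtain t where t: "t \<in> T" "max b' a < t"
      using less_cSup_iff[of T "max b' a"] aT bdd b' sa unfolding s_def by auto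
    have "t \<le> s" unfolding s_def using t(1) bdd by (rule cSup_upper)
    with t b' nT have "k a < k t" by (cases "t = s") auto
    with t show False by (auto simp: T_def)
  qed
  have "s = b"
  proof (rule ccontr)
    assume "s \<noteq> b"
    then obtain h where h: "h > 0" "s + h \<le> b" "k (s + h) < k s"
      using descent[OF as] sb by fastforce
    with sT as have "s + h \<in> T" by (auto simp: T_def)
    then have "s + h \<le> s" unfolding s_def using bdd by (rule cSup_upper)
    with h show False by simp
  qed
  with sT show ?thesis by (simp add: T_def)
qed

lemma dini_nonpos_imp_le:
  fixes g :: "real \<Rightarrow> real"
  assumes ab: "a \<le> b"
    and dini: "\<And>u e d. a \<le> u \<Longrightarrow> u < b \<Longrightarrow> e > 0 \<Longrightarrow> d > 0 \<Longrightarrow>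
                 \<exists>h. 0 < h \<and> h < d \<and> g (u + h) \<le> g u + e * h"
    and cont: "\<And>u. a < u \<Longrightarrow> u \<le> b \<Longrightarrow> continuous (at_left u) g"
  shows "g b \<le> g a"
proof (rule field_le_epsilon)
  fix \<epsilon> :: real assume "\<epsilon> > 0"
  define e where "e = \<epsilon> / (b - a + 1)"
  have e: "e > 0" "e * (b - a) \<le> \<epsilon>" using \<open>\<epsilon> > 0\<close> ab by (auto simp: e_def field_simps)
  have "g b - e * b \<le> g a - e * a"
  proof (rule right_descent_imp_le[OF ab])
    fix u assume u: "a \<le> u" "u < b"
    obtain h where h: "0 < h" "h < b - u" "g (u + h) \<le> g u + e / 2 * h"
      using dini[OF u, of "e / 2" "b - u"] e u by auto
    have "e * h > 0" using e h by simp
    with h show "\<exists>h>0. u + h \<le> b \<and> g (u + h) - e * (u + h) < g u - e * u"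
      by (intro exI[of _ h]) (auto simp: algebra_simps)
  next
    fix u assume "a < u" "u \<le> b"
    then show "continuous (at_left u) (\<lambda>u. g u - e * u)" using cont by (intro continuous_intros)
  qed
  then have "g b \<le> g a + e * (b - a)" by (simp add: algebra_simps)
  with e show "g b \<le> g a + \<epsilon>" by linarith
qed

lemma lower_dini_le_witness:
  assumes "lower_dini V \<phi> \<sigma> y \<le> ereal q" "e > 0" "d > 0"
  shows "\<exists>h. 0 < h \<and> h < d \<and> (V (\<phi> h y \<sigma>) - V y) / h < q + e"
proof (rule ccontr)
  assume "\<not> ?thesis"
  then have "\<forall>h. 0 < h \<and> h < d \<longrightarrow> q + e \<le> (V (\<phi> h y \<sigma>) - V y) / h" by (meson not_less)
  then have "eventually (\<lambda>h. ereal (q + e) \<le> ereal ((V (\<phi> h y \<sigma>) - V y) / h)) (at_right 0)"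
    unfolding eventually_at_right[OF assms(3)] using assms(3) by (intro exI[of _ d]) auto
  then have "ereal (q + e) \<le> lower_dini V \<phi> \<sigma> y"
    unfolding lower_dini_def by (rule Liminf_bounded)
  then have "ereal (q + e) \<le> ereal q" using assms(1) by (rule order_trans)
  with assms(2) show False by simp
qed

lemma powr_le_imp_le_root_mult:
  fixes a b A p :: real
  assumes "0 \<le> a" "0 \<le> b" "0 < p" "0 \<le> A" "a powr p \<le> A * b powr p"
  shows "a \<le> A powr (1 / p) * b"
proof -
  have "a = (a powr p) powr (1 / p)" using assms by (simp add: powr_powr)
  also have "\<dots> \<le> (A * b powr p) powr (1 / p)" using assms by (intro powr_mono2) auto
  also have "\<dots> = A powr (1 / p) * b" using assms by (simp add: powr_mult powr_powr)
  finally show ?thesis .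
qed

lemma halving_imp_exp_decay:
  fixes v :: "real \<Rightarrow> real"
  assumes c: "c > 0" and nonneg: "0 \<le> v 0"
    and antimono: "\<And>a b. 0 \<le> a \<Longrightarrow> a \<le> b \<Longrightarrow> v b \<le> v a"
    and halving: "\<And>b. 0 \<le> b \<Longrightarrow> 2 * v (b + c) \<le> v b"
    and a: "0 \<le> a"
  shows "v a \<le> 2 * exp (- (ln 2 / c) * a) * v 0"
proof -
  have iterate: "2 ^ n * v (b + real n * c) \<le> v b" if "0 \<le> b" for b n
  proof (induction n)
    case 0
    show ?case by simp
  next
    case (Suc n)
    have "2 ^ Suc n * v (b + real (Suc n) * c) = 2 ^ n * (2 * v ((b + real n * c) + c))"
      by (simp add: algebra_simps)
    also have "\<dots> \<le> 2 ^ n * v (b + real n * c)"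
      using halving[of "b + real n * c"] that c by (intro mult_left_mono) auto
    finally show ?case using Suc.IH by linarith
  qed
  define n where "n = nat \<lfloor>a / c\<rfloor>"
  have "real n \<le> a / c" "a / c - 1 < real n"
    using a c by (simp_all add: n_def divide_nonneg_pos)
  then have n: "real n * c \<le> a" "a / c - 1 < real n" using c by (simp_all add: field_simps)
  have "2 ^ n * v a \<le> v (a - real n * c)"
    using iterate[of "a - real n * c" n] n by simp
  also have "\<dots> \<le> v 0" using antimono n a by auto
  finally have "v a \<le> v 0 * (1 / 2 ^ n)" by (simp add: field_simps)
  have "1 / (2::real) ^ n = exp (- (real n * ln 2))"
    by (simp add: exp_of_nat_mult exp_minus field_simps)
  also have "\<dots> \<le> exp (- ((a / c - 1) * ln 2))"
    using n(2) by (simp add: mult_right_mono)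
  also have "- ((a / c - 1) * ln 2) = ln 2 + - (ln 2 / c) * a"
    using c by (simp add: field_simps)
  also have "exp (ln 2 + - (ln 2 / c) * a) = 2 * exp (- (ln 2 / c) * a)"
    unfolding exp_add[of "ln 2"] by simp
  finally have "v 0 * (1 / 2 ^ n) \<le> v 0 * (2 * exp (- (ln 2 / c) * a))"
    using nonneg by (intro mult_left_mono)
  with \<open>v a \<le> v 0 * (1 / 2 ^ n)\<close> show ?thesis by (simp add: mult_ac)
qed

lemma exists_dwell_time:
  fixes p c t1 r B :: real
  assumes p: "0 < p" and c: "0 < c" and t1: "0 < t1" and r: "0 < r"
    and rB: "r < B * min 1 ((t1 / c) powr (1 / p))"
  obtains d where "0 < d" "d < t1" "(c / d) powr (1 / p) * r = B"
proof -
  define \<eta> where "\<eta> = (t1 / c) powr (1 / p)"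
  have \<eta>: "0 < \<eta>" using t1 c by (simp add: \<eta>_def)
  have rB': "r < B * min 1 \<eta>" using rB by (simp add: \<eta>_def)
  have B: "0 < B" using zero_less_mult_pos2[of B "min 1 \<eta>"] rB' r \<eta> by simp
  have "B * min 1 \<eta> \<le> B * \<eta>" using B by (intro mult_left_mono) auto
  with rB' have "r < B * \<eta>" by linarith
  define q where "q = r / B"
  have q: "0 < q" "q < \<eta>" using r B \<open>r < B * \<eta>\<close> by (auto simp: q_def field_simps)
  define d where "d = c * q powr p"
  show ?thesis
  proof
    show "0 < d" using c q by (simp add: d_def)
    have "q powr p < \<eta> powr p" using q p by (intro powr_less_mono2) auto
    also have "\<eta> powr p = t1 / c" using p t1 c by (simp add: \<eta>_def powr_powr)
    finally show "d < t1" using c by (simp add: d_def field_simps)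
    have "(c / d) powr (1 / p) = ((1 / q) powr p) powr (1 / p)"
      using c q by (simp add: d_def powr_divide)
    also have "\<dots> = 1 / q" using p q by (simp add: powr_powr)
    finally show "(c / d) powr (1 / p) * r = B" using r B by (simp add: q_def)
  qed
qed

lemma Limsup_at_top_PInf_imp_exceeds:
  fixes f :: "'a::linorder \<Rightarrow> real"
  assumes "Limsup at_top (\<lambda>x. ereal (f x)) = \<infinity>"
  shows "\<exists>x\<ge>a. r < f x"
proof (rule ccontr)
  assume "\<not> ?thesis"
  then have "eventually (\<lambda>x. ereal (f x) \<le> ereal r) at_top"
    unfolding eventually_at_top_linorder by (auto intro!: exI[of _ a])
  then have "Limsup at_top (\<lambda>x. ereal (f x)) \<le> ereal r" by (rule Limsup_bounded)
  with assms show False by simp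
qed

lemma class_K_inf_mono:
  assumes "class_K_inf \<beta>" "0 \<le> a" "a \<le> b"
  shows "\<beta> a \<le> \<beta> b"
proof -
  have "strict_mono_on {0..} \<beta>" using assms(1) by (simp add: class_K_inf_def)
  then show ?thesis by (rule strict_mono_on_leD) (use assms in auto)
qed

lemma class_K_inf_surj:
  assumes beta: "class_K_inf \<beta>" and y: "0 \<le> y"
  shows "y \<in> \<beta> ` {0..}"
proof -
  have cont: "continuous_on {0..} \<beta>" and "\<beta> 0 = 0" and "\<forall>M. \<exists>r\<ge>0. \<beta> r > M"
    using beta unfolding class_K_inf_def by blast+
  then obtain r where "0 \<le> r" "y < \<beta> r" "\<beta> 0 \<le> y" using y by auto
  then have "\<exists>z\<ge>0. z \<le> r \<and> \<beta> z = y"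
    using cont by (intro IVT') (auto elim: continuous_on_subset)
  then show ?thesis by auto
qed

lemma class_K_inf_linear_bound:
  assumes beta: "class_K_inf \<beta>" and lin: "Limsup (at_right 0) (\<lambda>r. ereal (\<beta> r / r)) < \<infinity>"
    and \<rho>: "0 < \<rho>"
  obtains K where "0 < K" "\<forall>w\<in>{0..\<rho>}. \<beta> w \<le> K * w"
proof -
  obtain C :: real where "Limsup (at_right 0) (\<lambda>r. ereal (\<beta> r / r)) < ereal C"
  proof (cases "Limsup (at_right 0) (\<lambda>r. ereal (\<beta> r / r))")
    case (real l)
    then show ?thesis by (intro that[of "l + 1"]) simp
  qed (use lin in \<open>auto intro: that\<close>)
  then have "eventually (\<lambda>r. ereal (\<beta> r / r) < ereal C) (at_right 0)"
    using Limsup_le_iff[THEN iffD1, OF order_refl] by blast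
  then obtain b where b: "0 < b" "\<And>w. 0 < w \<Longrightarrow> w < b \<Longrightarrow> \<beta> w / w < C"
    unfolding eventually_at_right[OF zero_less_one] by auto
  define \<delta> where "\<delta> = min (b / 2) \<rho>"
  have \<delta>: "0 < \<delta>" "\<delta> < b" "\<delta> \<le> \<rho>" using b \<rho> by (auto simp: \<delta>_def)
  have \<beta>0: "\<beta> 0 = 0" using beta by (simp add: class_K_inf_def)
  have \<beta>\<rho>: "0 \<le> \<beta> \<rho>" using class_K_inf_mono[OF beta order_refl, of \<rho>] \<rho> \<beta>0 by simp
  define K where "K = max C (\<beta> \<rho> / \<delta>) + 1"
  have "0 \<le> \<beta> \<rho> / \<delta>" using \<beta>\<rho> \<delta> by simp
  then have K: "0 < K" unfolding K_def using max.cobounded2[of C "\<beta> \<rho> / \<delta>"] by linarith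
  have "\<beta> w \<le> K * w" if w: "w \<in> {0..\<rho>}" for w
  proof (cases "w = 0")
    case True
    then show ?thesis using \<beta>0 by simp
  next
    case False
    then have w0: "0 < w" using w by simp
    show ?thesis
    proof (cases "w < \<delta>")
      case True
      then have "\<beta> w < C * w" using b(2)[OF w0] \<delta> w0 by (simp add: field_simps)
      also have "\<dots> \<le> K * w" unfolding K_def using w0 by (intro mult_right_mono) auto
      finally show ?thesis by simp
    next
      case False
      have "\<beta> w \<le> \<beta> \<rho>" using class_K_inf_mono[OF beta, of w \<rho>] w by simp
      also have "\<dots> = (\<beta> \<rho> / \<delta>) * \<delta>" using \<delta> by simp
      also have "\<dots> \<le> (\<beta> \<rho> / \<delta>) * w" using False \<beta>\<rho> \<delta> by (intro mult_left_mono) auto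
      also have "\<dots> \<le> K * w" unfolding K_def using w0 by (intro mult_right_mono) auto
      finally show ?thesis .
    qed
  qed
  with K that show ?thesis by blast
qed

lemma local_lyapD:
  assumes "local_lyap S \<phi> R V p c" "x \<in> cball 0 R"
  shows "0 \<le> V x" "V x \<le> c * norm x powr p"
    and "\<sigma> \<in> S \<Longrightarrow> lower_dini V \<phi> \<sigma> x \<le> ereal (- (norm x powr p))"
    and "\<sigma> \<in> S \<Longrightarrow> 0 < t \<Longrightarrow> \<phi> t x \<sigma> \<in> cball 0 R \<Longrightarrow> continuous (at_left t) (\<lambda>s. V (\<phi> s x \<sigma>))"
  using assms by (auto simp: local_lyap_def)

definition decay_gain :: "real \<Rightarrow> real \<Rightarrow> real \<Rightarrow> real \<Rightarrow> real" where
  "decay_gain L p c d = (L powr p * max 1 (2 * c / d) * exp (ln 2 / c * d)) powr (1 / p)"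

lemma decay_gain_pos: "0 < L \<Longrightarrow> 0 < decay_gain L p c d"
  by (simp add: decay_gain_def)

locale forward_complete_system =
  fixes S :: "(real \<Rightarrow> 'q) set"
    and \<phi> :: "real \<Rightarrow> 'x::real_normed_vector \<Rightarrow> (real \<Rightarrow> 'q) \<Rightarrow> 'x"
  assumes forward_complete: "forward_complete_ds S \<phi>"
begin

lemma shift_in: "\<sigma> \<in> S \<Longrightarrow> 0 \<le> a \<Longrightarrow> (\<lambda>s. \<sigma> (a + s)) \<in> S"
  using forward_complete unfolding forward_complete_ds_def shift_closed_def by blast

lemma phi_0 [simp]: "\<sigma> \<in> S \<Longrightarrow> \<phi> 0 x \<sigma> = x"
  using forward_complete unfolding forward_complete_ds_def by blast

lemma continuous_on_trajectory: "\<sigma> \<in> S \<Longrightarrow> continuous_on {0..} (\<lambda>t. \<phi> t x \<sigma>)"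
  using forward_complete unfolding forward_complete_ds_def by blast

lemma phi_cocycle:
  "\<sigma> \<in> S \<Longrightarrow> 0 \<le> t \<Longrightarrow> 0 \<le> u \<Longrightarrow> \<phi> u (\<phi> t x \<sigma>) (\<lambda>s. \<sigma> (t + s)) = \<phi> (t + u) x \<sigma>"
  using forward_complete unfolding forward_complete_ds_def by blast

lemma local_lyap_dissipation:
  assumes LL: "local_lyap S \<phi> R V p c" and \<sigma>: "\<sigma> \<in> S" and T: "0 \<le> T" and p: "0 \<le> p"
    and traj: "\<forall>u\<in>{0..T}. \<phi> u x \<sigma> \<in> cball 0 R"
  shows "\<exists>s\<in>{0..T}. T * norm (\<phi> s x \<sigma>) powr p + V (\<phi> T x \<sigma>) \<le> V x"
proof -
  have "\<phi> 0 x \<sigma> \<in> cball 0 R" using traj T by auto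
  then have xR: "x \<in> cball 0 R" using \<sigma> by simp
  have "continuous_on {0..T} (\<lambda>u. norm (\<phi> u x \<sigma>))"
    using continuous_on_trajectory[OF \<sigma>, of x]
    by (intro continuous_intros) (auto elim: continuous_on_subset)
  then obtain s where s: "s \<in> {0..T}"
    and s_min: "\<And>u. u \<in> {0..T} \<Longrightarrow> norm (\<phi> s x \<sigma>) \<le> norm (\<phi> u x \<sigma>)"
    using continuous_attains_inf[of "{0..T}" "\<lambda>u. norm (\<phi> u x \<sigma>)"] T by auto
  define m where "m = norm (\<phi> s x \<sigma>) powr p"
  define g where "g u = V (\<phi> u x \<sigma>) + m * u" for u
  have "g T \<le> g 0"
  proof (rule dini_nonpos_imp_le[OF T])
    fix u e d :: real assume u: "0 \<le> u" "u < T" and e: "e > 0" and d: "d > 0"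
    define y where "y = \<phi> u x \<sigma>"
    have yR: "y \<in> cball 0 R" using traj u by (auto simp: y_def)
    obtain h where h: "0 < h" "h < d"
      and step: "(V (\<phi> h y (\<lambda>s. \<sigma> (u + s))) - V y) / h < - (norm y powr p) + e"
      using lower_dini_le_witness[OF local_lyapD(3)[OF LL yR shift_in[OF \<sigma> u(1)]] e d] by auto
    have "\<phi> h y (\<lambda>s. \<sigma> (u + s)) = \<phi> (u + h) x \<sigma>"
      using phi_cocycle[OF \<sigma> u(1)] h by (simp add: y_def)
    with step h have "V (\<phi> (u + h) x \<sigma>) - V y < (- (norm y powr p) + e) * h"
      by (simp add: pos_divide_less_eq)
    moreover have "m \<le> norm y powr p"
      unfolding m_def y_def using s_min[of u] u p by (intro powr_mono2) auto
    then have "m * h \<le> norm y powr p * h" using h by (intro mult_right_mono) auto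
    ultimately have "g (u + h) \<le> g u + e * h" unfolding g_def y_def[symmetric] by argo
    with h show "\<exists>h. 0 < h \<and> h < d \<and> g (u + h) \<le> g u + e * h" by blast
  next
    fix u assume "0 < u" "u \<le> T"
    then have "continuous (at_left u) (\<lambda>s. V (\<phi> s x \<sigma>))"
      using local_lyapD(4)[OF LL xR \<sigma>] traj by auto
    then show "continuous (at_left u) g" unfolding g_def by (intro continuous_intros)
  qed
  then show ?thesis using s \<sigma> by (intro bexI[of _ s]) (auto simp: g_def m_def algebra_simps)
qed

lemma local_lyap_dissipation_from:
  assumes LL: "local_lyap S \<phi> R V p c" and \<sigma>: "\<sigma> \<in> S" and a: "0 \<le> a" and T: "0 \<le> T"
    and p: "0 \<le> p" and traj: "\<forall>u\<in>{a..a+T}. \<phi> u x \<sigma> \<in> cball 0 R"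
  shows "\<exists>s\<in>{a..a+T}. T * norm (\<phi> s x \<sigma>) powr p + V (\<phi> (a + T) x \<sigma>) \<le> V (\<phi> a x \<sigma>)"
proof -
  have shifted: "\<phi> u (\<phi> a x \<sigma>) (\<lambda>s. \<sigma> (a + s)) = \<phi> (a + u) x \<sigma>" if "0 \<le> u" for u
    using phi_cocycle[OF \<sigma> a that] .
  have "\<forall>u\<in>{0..T}. \<phi> u (\<phi> a x \<sigma>) (\<lambda>s. \<sigma> (a + s)) \<in> cball 0 R"
    using traj by (auto simp: shifted)
  then obtain s where "s \<in> {0..T}"
    "T * norm (\<phi> s (\<phi> a x \<sigma>) (\<lambda>s. \<sigma> (a + s))) powr p
       + V (\<phi> T (\<phi> a x \<sigma>) (\<lambda>s. \<sigma> (a + s))) \<le> V (\<phi> a x \<sigma>)"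
    using local_lyap_dissipation[OF LL shift_in[OF \<sigma> a] T p] by blast
  then show ?thesis using T by (intro bexI[of _ "a + s"]) (auto simp: shifted)
qed

lemma local_lyap_antimono:
  assumes LL: "local_lyap S \<phi> R V p c" and \<sigma>: "\<sigma> \<in> S" and "0 \<le> a" "a \<le> b" and p: "0 \<le> p"
    and traj: "\<forall>u\<in>{a..b}. \<phi> u x \<sigma> \<in> cball 0 R"
  shows "V (\<phi> b x \<sigma>) \<le> V (\<phi> a x \<sigma>)"
proof -
  obtain s where "(b - a) * norm (\<phi> s x \<sigma>) powr p + V (\<phi> b x \<sigma>) \<le> V (\<phi> a x \<sigma>)"
    using local_lyap_dissipation_from[OF LL \<sigma> \<open>0 \<le> a\<close> _ p, of "b - a" x] traj \<open>a \<le> b\<close> by auto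
  moreover have "0 \<le> (b - a) * norm (\<phi> s x \<sigma>) powr p" using \<open>a \<le> b\<close> by simp
  ultimately show ?thesis by linarith
qed

lemma local_lyap_bound:
  assumes LL: "local_lyap S \<phi> R V p c" and \<sigma>: "\<sigma> \<in> S" and a: "0 \<le> a" and p: "0 \<le> p"
    and traj: "\<forall>u\<in>{0..a}. \<phi> u x \<sigma> \<in> cball 0 R"
  shows "V (\<phi> a x \<sigma>) \<le> c * norm x powr p"
proof -
  have "x \<in> cball 0 R" using traj a \<sigma> by force
  then have "V x \<le> c * norm x powr p" by (rule local_lyapD(2)[OF LL])
  with local_lyap_antimono[OF LL \<sigma> order_refl a p traj] \<sigma> show ?thesis by simp
qed

lemma local_lyap_halving:
  assumes LL: "local_lyap S \<phi> R V p c" and \<sigma>: "\<sigma> \<in> S" and b: "0 \<le> b" and c: "0 \<le> c"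
    and p: "0 \<le> p" and traj: "\<forall>u\<in>{b..b+c}. \<phi> u x \<sigma> \<in> cball 0 R"
  shows "2 * V (\<phi> (b + c) x \<sigma>) \<le> V (\<phi> b x \<sigma>)"
proof -
  obtain s where s: "s \<in> {b..b+c}"
    and diss: "c * norm (\<phi> s x \<sigma>) powr p + V (\<phi> (b + c) x \<sigma>) \<le> V (\<phi> b x \<sigma>)"
    using local_lyap_dissipation_from[OF LL \<sigma> b c p traj] by blast
  have "V (\<phi> (b + c) x \<sigma>) \<le> V (\<phi> s x \<sigma>)"
    using local_lyap_antimono[OF LL \<sigma> _ _ p, of s "b + c" x] s b traj by auto
  also have "\<dots> \<le> c * norm (\<phi> s x \<sigma>) powr p" using local_lyapD(2)[OF LL] traj s by auto
  finally show ?thesis using diss by linarith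
qed

end

locale bounded_overshoot = forward_complete_system S \<phi>
  for S :: "(real \<Rightarrow> 'q) set" and \<phi> :: "real \<Rightarrow> 'x::real_normed_vector \<Rightarrow> (real \<Rightarrow> 'q) \<Rightarrow> 'x" +
  fixes \<beta> :: "real \<Rightarrow> real" and t1 G0 :: real
  assumes t1_pos: "0 < t1" and G0_pos: "0 < G0" and class_K_inf: "class_K_inf \<beta>"
    and overshoot: "\<forall>t\<in>{0..t1}. \<forall>x. \<forall>\<sigma>\<in>S. norm (\<phi> t x \<sigma>) \<le> G0 * \<beta> (norm x)"
begin

lemma overshoot_from:
  assumes \<sigma>: "\<sigma> \<in> S" and s: "0 \<le> s" "s \<le> u" "u \<le> s + t1"
  shows "norm (\<phi> u x \<sigma>) \<le> G0 * \<beta> (norm (\<phi> s x \<sigma>))"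
proof -
  have "\<phi> u x \<sigma> = \<phi> (u - s) (\<phi> s x \<sigma>) (\<lambda>v. \<sigma> (s + v))"
    using phi_cocycle[OF \<sigma> s(1), of "u - s" x] s by simp
  then show ?thesis using overshoot shift_in[OF \<sigma> s(1)] s by auto
qed

lemma overshoot_mono: "0 \<le> a \<Longrightarrow> a \<le> b \<Longrightarrow> G0 * \<beta> a \<le> G0 * \<beta> b"
  using class_K_inf_mono[OF class_K_inf] G0_pos by (simp add: mult_left_mono)

text \<open>The window \<open>[b - d, b]\<close> contains a state \<open>s\<close> with \<open>d |\<phi>(s)|\<^sup>p \<le> V(x) \<le> c r\<^sup>p\<close>, and the
  overshoot bound from \<open>s\<close> reaches up to \<open>s + t1 \<ge> b - d + t1\<close>.\<close>

lemma local_lyap_trajectory_extends: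
  assumes LL: "local_lyap S \<phi> R V p c" and p: "0 < p" and c: "0 < c" and d: "0 < d" "d \<le> t1"
    and hr2: "G0 * \<beta> ((c / d) powr (1 / p) * r) \<le> R" and \<sigma>: "\<sigma> \<in> S" and x: "norm x \<le> r"
    and b: "d \<le> b" and traj: "\<forall>u\<in>{0..b}. \<phi> u x \<sigma> \<in> cball 0 R"
    and u: "b \<le> u" "u \<le> b - d + t1"
  shows "\<phi> u x \<sigma> \<in> cball 0 R"
proof -
  define a where "a = b - d"
  have a: "0 \<le> a" "a + d = b" using b by (auto simp: a_def)
  obtain s where s: "s \<in> {a..b}"
    and diss: "d * norm (\<phi> s x \<sigma>) powr p + V (\<phi> b x \<sigma>) \<le> V (\<phi> a x \<sigma>)"
    using local_lyap_dissipation_from[OF LL \<sigma> a(1), of d x] traj d p a by auto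
  have "0 \<le> V (\<phi> b x \<sigma>)" using local_lyapD(1)[OF LL] traj b d by auto
  moreover have "\<forall>v\<in>{0..a}. \<phi> v x \<sigma> \<in> cball 0 R" using traj a d by auto
  then have "V (\<phi> a x \<sigma>) \<le> c * norm x powr p"
    using local_lyap_bound[OF LL \<sigma> a(1) less_imp_le[OF p]] by blast
  moreover have "c * norm x powr p \<le> c * r powr p"
    using x p c by (intro mult_left_mono powr_mono2) auto
  ultimately have "d * norm (\<phi> s x \<sigma>) powr p \<le> c * r powr p" using diss by linarith
  then have "norm (\<phi> s x \<sigma>) \<le> (c / d) powr (1 / p) * r"
    using d p c order_trans[OF norm_ge_zero x]
    by (intro powr_le_imp_le_root_mult) (auto simp: field_simps)
  moreover have "norm (\<phi> u x \<sigma>) \<le> G0 * \<beta> (norm (\<phi> s x \<sigma>))"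
    using overshoot_from[OF \<sigma>] s u a by auto
  ultimately have "norm (\<phi> u x \<sigma>) \<le> G0 * \<beta> ((c / d) powr (1 / p) * r)"
    using overshoot_mono[of "norm (\<phi> s x \<sigma>)"] by force
  with hr2 show ?thesis by simp
qed

lemma local_lyap_trajectory_stays:
  assumes LL: "local_lyap S \<phi> R V p c" and p: "0 < p" and c: "0 < c" and d: "0 < d" "d < t1"
    and hr1: "G0 * \<beta> r \<le> R" and hr2: "G0 * \<beta> ((c / d) powr (1 / p) * r) \<le> R"
    and \<sigma>: "\<sigma> \<in> S" and x: "norm x \<le> r" and u: "0 \<le> u"
  shows "\<phi> u x \<sigma> \<in> cball 0 R"
proof -
  define e where "e = t1 - d"
  have e: "0 < e" using d by (simp add: e_def)
  have windows: "\<forall>u\<in>{0..d + real k * e}. \<phi> u x \<sigma> \<in> cball 0 R" for k :: nat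
  proof (induction k)
    case 0
    show ?case
    proof
      fix u assume "u \<in> {0..d + real 0 * e}"
      then have "norm (\<phi> u x \<sigma>) \<le> G0 * \<beta> (norm x)"
        using overshoot_from[OF \<sigma>, of 0 u x] d \<sigma> by auto
      also have "\<dots> \<le> G0 * \<beta> r" using x by (intro overshoot_mono) auto
      finally show "\<phi> u x \<sigma> \<in> cball 0 R" using hr1 by simp
    qed
  next
    case (Suc k)
    show ?case
    proof
      fix u assume u: "u \<in> {0..d + real (Suc k) * e}"
      show "\<phi> u x \<sigma> \<in> cball 0 R"
      proof (cases "u \<le> d + real k * e")
        case True
        with u Suc.IH show ?thesis by auto
      next
        case False
        have "d \<le> d + real k * e" using e by simp
        moreover have "d + real k * e - d + t1 = d + real (Suc k) * e"
          by (simp add: e_def algebra_simps)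
        ultimately show ?thesis
          using local_lyap_trajectory_extends[OF LL p c d(1) less_imp_le[OF d(2)] hr2 \<sigma> x _ Suc.IH]
            False u by auto
      qed
    qed
  qed
  obtain k :: nat where "u / e \<le> real k" using real_arch_simple by blast
  then have "u \<le> d + real k * e" using e d by (simp add: field_simps)
  with windows[of k] u show ?thesis by auto
qed

lemma local_lyap_powr_decay:
  assumes LL: "local_lyap S \<phi> R V p c" and p: "0 < p" and c: "0 < c" and d: "0 < d" "d \<le> t1"
    and K: "0 < K" "\<forall>w\<in>{0..R}. \<beta> w \<le> K * w"
    and \<sigma>: "\<sigma> \<in> S" and inball: "\<And>u. 0 \<le> u \<Longrightarrow> \<phi> u x \<sigma> \<in> cball 0 R" and t: "0 \<le> t"
  shows "norm (\<phi> t x \<sigma>) powr p \<le>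
    (G0 * K) powr p * max 1 (2 * c / d) * exp (ln 2 / c * d) * exp (- (ln 2 / c) * t) * norm x powr p"
proof -
  define \<mu> where "\<mu> = ln 2 / c"
  define v where "v u = V (\<phi> u x \<sigma>)" for u
  define Q where "Q = max 1 (2 * c / d)"
  have traj: "\<forall>u\<in>{a..b}. \<phi> u x \<sigma> \<in> cball 0 R" if "0 \<le> a" for a b
    using inball that by auto
  have v_decay: "v a \<le> 2 * exp (- \<mu> * a) * (c * norm x powr p)" if a: "0 \<le> a" for a
  proof -
    have "v a \<le> 2 * exp (- \<mu> * a) * v 0" unfolding \<mu>_def
    proof (rule halving_imp_exp_decay[OF c _ _ _ a])
      show "0 \<le> v 0" using local_lyapD(1)[OF LL inball[OF order_refl]] by (simp add: v_def)
      show "v b \<le> v a" if "0 \<le> a" "a \<le> b" for a b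
        using local_lyap_antimono[OF LL \<sigma> that _ traj[OF that(1)]] p by (simp add: v_def)
      show "2 * v (b + c) \<le> v b" if "0 \<le> b" for b
        using local_lyap_halving[OF LL \<sigma> that _ _ traj[OF that]] c p by (simp add: v_def)
    qed
    also have "v 0 \<le> c * norm x powr p"
      using local_lyap_bound[OF LL \<sigma> order_refl _ traj] p by (simp add: v_def)
    finally show ?thesis by (simp add: mult_left_mono)
  qed
  have gain: "norm (\<phi> u x \<sigma>) powr p \<le> (G0 * K) powr p * norm (\<phi> s x \<sigma>) powr p"
    if s: "0 \<le> s" "s \<le> u" "u \<le> s + t1" for s u
  proof -
    have "norm (\<phi> u x \<sigma>) \<le> G0 * \<beta> (norm (\<phi> s x \<sigma>))" by (rule overshoot_from[OF \<sigma> s])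
    also have "\<dots> \<le> G0 * (K * norm (\<phi> s x \<sigma>))"
      using K(2) inball[OF s(1)] G0_pos by (intro mult_left_mono) auto
    finally have "norm (\<phi> u x \<sigma>) powr p \<le> (G0 * (K * norm (\<phi> s x \<sigma>))) powr p"
      using p by (intro powr_mono2) auto
    then show ?thesis by (simp add: powr_mult mult.assoc)
  qed
  have "\<exists>s. 0 \<le> s \<and> s \<le> t \<and> t \<le> s + t1 \<and>
      norm (\<phi> s x \<sigma>) powr p \<le> Q * exp (- \<mu> * (t - d)) * norm x powr p"
  proof (cases "t \<le> d")
    case True
    have "ln 2 * (t - d) \<le> 0" using True by (simp add: mult_nonneg_nonpos)
    then have "1 \<le> exp (- \<mu> * (t - d))" using c by (simp add: \<mu>_def divide_nonpos_pos)
    moreover have "1 \<le> Q" by (simp add: Q_def)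
    ultimately have "1 \<le> Q * exp (- \<mu> * (t - d))" by (metis mult_mono' mult_1 zero_le_one)
    then have "1 * norm x powr p \<le> Q * exp (- \<mu> * (t - d)) * norm x powr p"
      by (rule mult_right_mono) simp
    with True d t \<sigma> show ?thesis by (intro exI[of _ 0]) auto
  next
    case False
    define a where "a = t - d"
    have a: "0 \<le> a" "a + d = t" using False by (auto simp: a_def)
    obtain s where s: "s \<in> {a..t}"
      and diss: "d * norm (\<phi> s x \<sigma>) powr p + V (\<phi> t x \<sigma>) \<le> V (\<phi> a x \<sigma>)"
      using local_lyap_dissipation_from[OF LL \<sigma> a(1) _ _ traj[OF a(1)], of d] d p a by auto
    have "d * norm (\<phi> s x \<sigma>) powr p \<le> v a"
      using diss local_lyapD(1)[OF LL inball[OF t]] by (simp add: v_def)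
    also have "\<dots> \<le> 2 * exp (- \<mu> * a) * (c * norm x powr p)" by (rule v_decay[OF a(1)])
    finally have "norm (\<phi> s x \<sigma>) powr p \<le> 2 * c / d * exp (- \<mu> * (t - d)) * norm x powr p"
      using d by (simp add: a_def field_simps)
    also have "\<dots> \<le> Q * exp (- \<mu> * (t - d)) * norm x powr p"
      by (intro mult_right_mono) (auto simp: Q_def)
    finally show ?thesis using s a d by (intro exI[of _ s]) auto
  qed
  then obtain s where s: "0 \<le> s" "s \<le> t" "t \<le> s + t1"
    and small: "norm (\<phi> s x \<sigma>) powr p \<le> Q * exp (- \<mu> * (t - d)) * norm x powr p"
    by blast
  have "norm (\<phi> t x \<sigma>) powr p \<le> (G0 * K) powr p * (Q * exp (- \<mu> * (t - d)) * norm x powr p)"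
    using gain[OF s] mult_left_mono[OF small powr_ge_zero] by (rule order_trans)
  also have "exp (- \<mu> * (t - d)) = exp (\<mu> * d) * exp (- \<mu> * t)"
    by (simp add: exp_add[symmetric] algebra_simps)
  finally show ?thesis by (simp add: \<mu>_def Q_def mult_ac)
qed

lemma local_lyap_exp_decay:
  assumes LL: "local_lyap S \<phi> R V p c" and p: "0 < p" and c: "0 < c" and d: "0 < d" "d < t1"
    and K: "0 < K" "\<forall>w\<in>{0..R}. \<beta> w \<le> K * w"
    and hr1: "G0 * \<beta> r \<le> R" and hr2: "G0 * \<beta> ((c / d) powr (1 / p) * r) \<le> R"
    and \<sigma>: "\<sigma> \<in> S" and x: "norm x \<le> r" and t: "0 \<le> t"
  shows "norm (\<phi> t x \<sigma>) \<le> decay_gain (G0 * K) p c d * exp (- (ln 2 / (c * p)) * t) * norm x"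
proof -
  define A where "A = (G0 * K) powr p * max 1 (2 * c / d) * exp (ln 2 / c * d)"
  have "norm (\<phi> t x \<sigma>) powr p \<le> (A * exp (- (ln 2 / c) * t)) * norm x powr p"
    using local_lyap_powr_decay[OF LL p c d(1) less_imp_le[OF d(2)] K \<sigma> _ t]
      local_lyap_trajectory_stays[OF LL p c d hr1 hr2 \<sigma> x]
    by (simp add: A_def mult_ac)
  then have "norm (\<phi> t x \<sigma>) \<le> (A * exp (- (ln 2 / c) * t)) powr (1 / p) * norm x"
    using p by (intro powr_le_imp_le_root_mult) (auto simp: A_def)
  also have "(A * exp (- (ln 2 / c) * t)) powr (1 / p)
      = decay_gain (G0 * K) p c d * exp (- (ln 2 / (c * p)) * t)"
    by (simp add: A_def decay_gain_def powr_mult exp_powr_real)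
  finally show ?thesis .
qed

lemma local_lyap_imp_ULES:
  assumes beta_lin: "Limsup (at_right 0) (\<lambda>r. ereal (\<beta> r / r)) < \<infinity>"
    and R: "0 < R" and p: "0 < p" and c: "0 < c" and LL: "local_lyap S \<phi> R V p c"
  shows "ULES S \<phi>"
proof -
  obtain K where K: "0 < K" "\<forall>w\<in>{0..R}. \<beta> w \<le> K * w"
    using class_K_inf_linear_bound[OF class_K_inf beta_lin R] by blast
  define d where "d = t1 / 2"
  have d: "0 < d" "d < t1" using t1_pos by (auto simp: d_def)
  define \<theta> where "\<theta> = (c / d) powr (1 / p)"
  define m where "m = min R (R / (G0 * K))"
  define r where "r = m / (1 + \<theta>)"
  have m: "0 < m" "m \<le> R" "m \<le> R / (G0 * K)" using R G0_pos K by (auto simp: m_def)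
  have \<theta>: "0 \<le> \<theta>" by (simp add: \<theta>_def)
  have r: "0 < r" "r \<le> m" "\<theta> * r \<le> m" using m \<theta> by (auto simp: r_def field_simps)
  have small: "G0 * \<beta> w \<le> R" if "0 \<le> w" "w \<le> m" for w
  proof -
    have "G0 * \<beta> w \<le> G0 * (K * w)" using K that m G0_pos by (intro mult_left_mono) auto
    also have "\<dots> \<le> G0 * (K * (R / (G0 * K)))" using that m K G0_pos by (intro mult_left_mono) auto
    also have "\<dots> = R" using G0_pos K by simp
    finally show ?thesis .
  qed
  have hr1: "G0 * \<beta> r \<le> R" and hr2: "G0 * \<beta> (\<theta> * r) \<le> R"
    using r \<theta> by (auto intro!: small)
  show ?thesis unfolding ULES_def
  proof (intro exI conjI allI impI ballI)
    show "0 < r" "0 < decay_gain (G0 * K) p c d" "0 < ln 2 / (c * p)"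
      using r G0_pos K c p by (auto intro: decay_gain_pos)
    fix t :: real and x :: 'x and \<sigma> assume "0 \<le> t" "x \<in> cball 0 r" "\<sigma> \<in> S"
    then show "norm (\<phi> t x \<sigma>) \<le> decay_gain (G0 * K) p c d * exp (- (ln 2 / (c * p)) * t) * norm x"
      using local_lyap_exp_decay[OF LL p c d K hr1 hr2[unfolded \<theta>_def]] by simp
  qed
qed

lemma local_lyap_family_imp_USGES:
  fixes pR cR :: "real \<Rightarrow> real"
  assumes beta_lin: "Limsup (at_right 0) (\<lambda>r. ereal (\<beta> r / r)) < \<infinity>"
    and lyap: "\<forall>R>0. pR R > 0 \<and> cR R > 0 \<and> (\<exists>V. local_lyap S \<phi> R V (pR R) (cR R))"
    and radius: "Limsup at_top (\<lambda>R. ereal (inv_into {0..} \<beta> (R / G0) *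
                                   min 1 ((t1 / cR R) powr (1 / pR R)))) = \<infinity>"
  shows "USGES S \<phi>"
  unfolding USGES_def
proof (intro allI impI)
  fix r :: real assume r: "0 < r"
  obtain R where R: "1 \<le> R"
    and big: "r < inv_into {0..} \<beta> (R / G0) * min 1 ((t1 / cR R) powr (1 / pR R))"
    using Limsup_at_top_PInf_imp_exceeds[OF radius] by blast
  define p where "p = pR R"
  define c where "c = cR R"
  have "0 < R" using R by simp
  then obtain V where p: "0 < p" and c: "0 < c" and LL: "local_lyap S \<phi> R V p c"
    using lyap by (auto simp: p_def c_def)
  define B where "B = inv_into {0..} \<beta> (R / G0)"
  have B_preimage: "R / G0 \<in> \<beta> ` {0..}" using class_K_inf_surj[OF class_K_inf] R G0_pos by simp
  have B: "0 \<le> B" "G0 * \<beta> B = R"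
    using inv_into_into[OF B_preimage] f_inv_into_f[OF B_preimage] G0_pos by (auto simp: B_def)
  txt \<open>The window length \<open>d\<close> is tuned so that the bound \<open>(c/d)^(1/p) r\<close> on states inside a window is
    exactly the radius whose overshoot is \<open>R\<close>.\<close>
  obtain d where d: "0 < d" "d < t1" and dB: "(c / d) powr (1 / p) * r = B"
    using exists_dwell_time[OF p c t1_pos r] big by (auto simp: B_def p_def c_def)
  have "B * min 1 ((t1 / c) powr (1 / p)) \<le> B" using B by (simp add: mult_left_le)
  then have hr1: "G0 * \<beta> r \<le> R"
    using big overshoot_mono[of r B] r B by (simp add: B_def p_def c_def)
  have hr2: "G0 * \<beta> ((c / d) powr (1 / p) * r) \<le> R" using dB B by simp
  obtain K where K: "0 < K" "\<forall>w\<in>{0..R}. \<beta> w \<le> K * w"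
    using class_K_inf_linear_bound[OF class_K_inf beta_lin \<open>0 < R\<close>] by blast
  show "\<exists>M>0. \<exists>lam>0. \<forall>t\<ge>0. \<forall>x\<in>cball 0 r. \<forall>\<sigma>\<in>S.
      norm (\<phi> t x \<sigma>) \<le> M * exp (- lam * t) * norm x"
  proof (intro exI conjI allI impI ballI)
    show "0 < decay_gain (G0 * K) p c d" "0 < ln 2 / (c * p)"
      using G0_pos K c p by (auto intro: decay_gain_pos)
    fix t :: real and x :: 'x and \<sigma> assume "0 \<le> t" "x \<in> cball 0 r" "\<sigma> \<in> S"
    then show "norm (\<phi> t x \<sigma>) \<le> decay_gain (G0 * K) p c d * exp (- (ln 2 / (c * p)) * t) * norm x"
      using local_lyap_exp_decay[OF LL p c d K hr1 hr2] by simp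
  qed
qed

lemma global_lyap_imp_UGES:
  fixes V :: "'x \<Rightarrow> real"
  assumes beta_id: "\<forall>r\<ge>0. \<beta> r = r" and p: "0 < p" and c: "0 < c"
    and lyap: "\<forall>x. V x \<ge> 0 \<and> V x \<le> c * norm x powr p \<and>
             (\<forall>\<sigma>\<in>S. lower_dini V \<phi> \<sigma> x \<le> ereal (- (norm x powr p)) \<and>
                (\<forall>t>0. continuous (at_left t) (\<lambda>s. V (\<phi> s x \<sigma>))))"
  shows "UGES S \<phi>"
proof -
  have LL: "local_lyap S \<phi> R V p c" for R using lyap by (simp add: local_lyap_def)
  define d where "d = t1 / 2"
  have d: "0 < d" "d < t1" using t1_pos by (auto simp: d_def)
  define \<theta> where "\<theta> = (c / d) powr (1 / p)"
  show ?thesis unfolding UGES_def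
  proof (intro exI conjI allI impI ballI)
    show "0 < decay_gain (G0 * 1) p c d" "0 < ln 2 / (c * p)"
      using G0_pos c p by (auto intro: decay_gain_pos)
    fix t :: real and x :: 'x and \<sigma> assume t: "0 \<le> t" and \<sigma>: "\<sigma> \<in> S"
    define R where "R = G0 * (1 + \<theta>) * norm x"
    have K: "\<forall>w\<in>{0..R}. \<beta> w \<le> 1 * w" using beta_id by simp
    have hr1: "G0 * \<beta> (norm x) \<le> R" and hr2: "G0 * \<beta> (\<theta> * norm x) \<le> R"
      using beta_id G0_pos by (auto simp: R_def \<theta>_def algebra_simps)
    show "norm (\<phi> t x \<sigma>) \<le> decay_gain (G0 * 1) p c d * exp (- (ln 2 / (c * p)) * t) * norm x"
      using local_lyap_exp_decay[OF LL p c d zero_less_one K hr1 hr2[unfolded \<theta>_def] \<sigma> order_refl t]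
      by simp
  qed
qed

end

theorem theorem4:
  fixes S :: "(real \<Rightarrow> 'q) set"
    and \<phi> :: "real \<Rightarrow> 'x::banach \<Rightarrow> (real \<Rightarrow> 'q) \<Rightarrow> 'x"
    and \<beta> :: "real \<Rightarrow> real"
    and t1 G0 :: real
  assumes sys: "forward_complete_ds S \<phi>"
    and t1: "t1 > 0" and G0: "G0 > 0"
    and beta: "class_K_inf \<beta>"
    and beta_lin: "Limsup (at_right 0) (\<lambda>r. ereal (\<beta> r / r)) < \<infinity>"
    and bound: "\<forall>t\<in>{0..t1}. \<forall>x. \<forall>\<sigma>\<in>S. norm (\<phi> t x \<sigma>) \<le> G0 * \<beta> (norm x)"
  shows
    "((\<exists>R>0. \<exists>V p c. p > 0 \<and> c > 0 \<and> local_lyap S \<phi> R V p c) \<longrightarrow> ULES S \<phi>) \<and>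
     ((\<exists>pR cR :: real \<Rightarrow> real.
         (\<forall>R>0. pR R > 0 \<and> cR R > 0 \<and> (\<exists>V. local_lyap S \<phi> R V (pR R) (cR R))) \<and>
         Limsup at_top (\<lambda>R. ereal (inv_into {0..} \<beta> (R / G0) *
                                   min 1 ((t1 / cR R) powr (1 / pR R)))) = \<infinity>)
        \<longrightarrow> USGES S \<phi>) \<and>
     (((\<forall>r\<ge>0. \<beta> r = r) \<and>
       (\<exists>p c. \<exists>V :: 'x \<Rightarrow> real. p > 0 \<and> c > 0 \<and>
          (\<forall>x. V x \<ge> 0 \<and> V x \<le> c * norm x powr p \<and>
             (\<forall>\<sigma>\<in>S. lower_dini V \<phi> \<sigma> x \<le> ereal (- (norm x powr p)) \<and>
                (\<forall>t>0. continuous (at_left t) (\<lambda>s. V (\<phi> s x \<sigma>)))))))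
        \<longrightarrow> UGES S \<phi>)"
proof -
  interpret bounded_overshoot S \<phi> \<beta> t1 G0
    by unfold_locales (fact sys t1 G0 beta bound)+
  show ?thesis
    by (intro conjI impI; elim exE conjE)
      (auto intro: local_lyap_imp_ULES[OF beta_lin] local_lyap_family_imp_USGES[OF beta_lin]
         global_lyap_imp_UGES)
qed

end
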